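(* Let $\widetilde\nabla$ be a canonical snm-connection on $\mathbb R^3$ determined by the unit constant vector field $\mathsf C$. Then every cylindrical surface whose rulings are parallel to $\mathsf C$ has constant sectional curvature $K\equiv\tfrac12$ with respect to $\widetilde\nabla$.
   Context: Let $\langle\cdot,\cdot\rangle$ be the Euclidean metric on $\mathbb R^3$ and $\widetilde\nabla^0$ its Levi-Civita connection (the ordinary directional derivative). Given a smooth vector field $\mathsf C$ on $\mathbb R^3$, the semi-symmetric non-metric connection (snm-connection) determined by $\mathsf C$ is $\widetilde\nabla_XY=\widetilde\nabla^0_XY+\langle \mathsf C,Y\rangle X$. It is called canonical if $\mathsf C$ is a constant vector field with $|\mathsf C|=1$. Its curvature tensor is $\widetilde R(X,Y)Z=\widetilde\nabla_X\widetilde\nabla_YZ-\widetilde\nabla_Y\widetilde\nabla_XZ-\widetilde\nabla_{[X,Y]}Z$. For a surface $M$ immersed in $\mathbb R^3$, the induced connection is $\nabla_XY=(\widetilde\nabla_XY)^{\top}$ (tangential component), with curvature tensor $R$ defined by the same formula, and the sectional curvature of $M$ with respect to $\widetilde\nabla$ at $p$ is $K(p)=\frac12\big(\langle R(e_1,e_2)e_2,e_1\rangle+\langle R(e_2,e_1)e_1,e_2\rangle\big)$ for an orthonormal basis $\{e_1,e_2\}$ of $T_pM$. A cylindrical surface with rulings parallel to a unit vector $\vec w$ is a surface $\psi(s,t)=\gamma(s)+t\vec w$, $s\in I$, $t\in\mathbb R$, where $\gamma$ is a regular curve in a plane orthogonal to $\vec w$. *)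

theory Defs
  imports "HOL-Analysis.Analysis" "HOL-Analysis.Cross3"
begin

definition ds :: "(real \<times> real \<Rightarrow> 'a::real_normed_vector) \<Rightarrow> real \<times> real \<Rightarrow> 'a" where
  "ds F p = vector_derivative (\<lambda>u. F (u, snd p)) (at (fst p))"

definition dt :: "(real \<times> real \<Rightarrow> 'a::real_normed_vector) \<Rightarrow> real \<times> real \<Rightarrow> 'a" where
  "dt F p = vector_derivative (\<lambda>v. F (fst p, v)) (at (snd p))"

fun pd :: "bool list \<Rightarrow> (real \<times> real \<Rightarrow> 'a::real_normed_vector) \<Rightarrow> real \<times> real \<Rightarrow> 'a" where
  "pd [] F = F"
| "pd (b # bs) F = (if b then ds (pd bs F) else dt (pd bs F))"

definition smooth2_on :: "(real \<times> real) set \<Rightarrow> (real \<times> real \<Rightarrow> 'a::real_normed_vector) \<Rightarrow> bool" where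
  "smooth2_on S F \<longleftrightarrow>
     (\<forall>bs. continuous_on S (pd bs F) \<and>
        (\<forall>p\<in>S. (\<lambda>u. pd bs F (u, snd p)) differentiable (at (fst p)) \<and>
               (\<lambda>v. pd bs F (fst p, v)) differentiable (at (snd p))))"

definition vderiv :: "(real \<Rightarrow> 'a::real_normed_vector) \<Rightarrow> real \<Rightarrow> 'a" where
  "vderiv g s = vector_derivative g (at s)"

definition smooth1_on :: "real set \<Rightarrow> (real \<Rightarrow> 'a::real_normed_vector) \<Rightarrow> bool" where
  "smooth1_on I g \<longleftrightarrow>
     (\<forall>n. continuous_on I ((vderiv ^^ n) g) \<and> (\<forall>s\<in>I. ((vderiv ^^ n) g) differentiable (at s)))"

text \<open>Tangent vector fields on the parametrized surface psi are given by their
  coefficient fields V = (a,b) on the parameter domain: X = a psi_s + b psi_t.\<close>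

definition push :: "(real \<times> real \<Rightarrow> real^3) \<Rightarrow> (real \<times> real \<Rightarrow> real \<times> real) \<Rightarrow> real \<times> real \<Rightarrow> real^3" where
  "push \<psi> V p = fst (V p) *\<^sub>R ds \<psi> p + snd (V p) *\<^sub>R dt \<psi> p"

text \<open>Directional derivative along V of a function on the parameter domain
  (for an R^3-valued field this is the ordinary derivative nabla^0 along push psi V).\<close>

definition dirD :: "(real \<times> real \<Rightarrow> real \<times> real) \<Rightarrow> (real \<times> real \<Rightarrow> 'a::real_normed_vector) \<Rightarrow> real \<times> real \<Rightarrow> 'a" where
  "dirD V F p = fst (V p) *\<^sub>R ds F p + snd (V p) *\<^sub>R dt F p"

definition lie :: "(real \<times> real \<Rightarrow> real \<times> real) \<Rightarrow> (real \<times> real \<Rightarrow> real \<times> real) \<Rightarrow> real \<times> real \<Rightarrow> real \<times> real" where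
  "lie V W p = dirD V W p - dirD W V p"

definition unit_normal :: "(real \<times> real \<Rightarrow> real^3) \<Rightarrow> real \<times> real \<Rightarrow> real^3" where
  "unit_normal \<psi> p = (let n = cross3 (ds \<psi> p) (dt \<psi> p) in (1 / norm n) *\<^sub>R n)"

definition tang :: "(real \<times> real \<Rightarrow> real^3) \<Rightarrow> real \<times> real \<Rightarrow> real^3 \<Rightarrow> real^3" where
  "tang \<psi> p v = v - (v \<bullet> unit_normal \<psi> p) *\<^sub>R unit_normal \<psi> p"

definition snm_conn :: "real^3 \<Rightarrow> (real \<times> real \<Rightarrow> real^3) \<Rightarrow> (real \<times> real \<Rightarrow> real \<times> real) \<Rightarrow> (real \<times> real \<Rightarrow> real^3) \<Rightarrow> real \<times> real \<Rightarrow> real^3" where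
  "snm_conn C \<psi> V Y p = dirD V Y p + (C \<bullet> Y p) *\<^sub>R push \<psi> V p"

definition ind_conn :: "real^3 \<Rightarrow> (real \<times> real \<Rightarrow> real^3) \<Rightarrow> (real \<times> real \<Rightarrow> real \<times> real) \<Rightarrow> (real \<times> real \<Rightarrow> real^3) \<Rightarrow> real \<times> real \<Rightarrow> real^3" where
  "ind_conn C \<psi> V Y p = tang \<psi> p (snm_conn C \<psi> V Y p)"

definition ind_curv :: "real^3 \<Rightarrow> (real \<times> real \<Rightarrow> real^3) \<Rightarrow> (real \<times> real \<Rightarrow> real \<times> real) \<Rightarrow> (real \<times> real \<Rightarrow> real \<times> real) \<Rightarrow> (real \<times> real \<Rightarrow> real \<times> real) \<Rightarrow> real \<times> real \<Rightarrow> real^3" where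
  "ind_curv C \<psi> X Y Z p =
     ind_conn C \<psi> X (ind_conn C \<psi> Y (push \<psi> Z)) p
   - ind_conn C \<psi> Y (ind_conn C \<psi> X (push \<psi> Z)) p
   - ind_conn C \<psi> (lie X Y) (push \<psi> Z) p"

text \<open>Sectional curvature expression for fields E1, E2 (orthonormal at p).\<close>

definition sect_curv :: "real^3 \<Rightarrow> (real \<times> real \<Rightarrow> real^3) \<Rightarrow> (real \<times> real \<Rightarrow> real \<times> real) \<Rightarrow> (real \<times> real \<Rightarrow> real \<times> real) \<Rightarrow> real \<times> real \<Rightarrow> real" where
  "sect_curv C \<psi> E1 E2 p =
     (1/2) * (ind_curv C \<psi> E1 E2 E2 p \<bullet> push \<psi> E1 p + ind_curv C \<psi> E2 E1 E1 p \<bullet> push \<psi> E2 p)"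

end

theory Submission
  imports Defs
begin

text \<open>Along the cylinder \<open>\<psi>(s, t) = \<gamma>(s) + t w\<close> the coordinate fields \<open>\<psi>\<^sub>s = \<gamma>'\<close> and
  \<open>\<psi>\<^sub>t = w\<close> are orthogonal, and \<open>C = \<epsilon> w\<close> with \<open>\<epsilon>\<^sup>2 = 1\<close>, so \<open>C\<close> is orthogonal to \<open>\<gamma>'\<close>.
  Since \<open>\<gamma>''\<close> is orthogonal to \<open>w\<close>, its tangential part is \<open>\<kappa> \<gamma>'\<close>, and in this frame the
  induced connection has the coefficients \<open>\<nabla>\<^sub>X Z = X(Z) + (\<kappa> x\<^sub>s z\<^sub>s + \<epsilon> x\<^sub>s z\<^sub>t, \<epsilon> x\<^sub>t z\<^sub>t)\<close>,
  the \<open>\<epsilon>\<close>-terms being \<open>\<langle>C, Z\<rangle> X\<close>. In the curvature all derivative terms cancel (by the symmetry of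
  mixed partials), leaving \<open>R(X, Y) Z = z\<^sub>t (x\<^sub>s y\<^sub>t - x\<^sub>t y\<^sub>s) \<gamma>'\<close>. For an orthonormal pair
  \<open>E\<^sub>1, E\<^sub>2\<close> the sectional curvature is then half of
  \<open>|\<gamma>'|\<^sup>2 (e\<^sub>1\<^sub>s e\<^sub>2\<^sub>t - e\<^sub>1\<^sub>t e\<^sub>2\<^sub>s)\<^sup>2\<close>, the Gram determinant of \<open>E\<^sub>1, E\<^sub>2\<close>, which is \<open>1\<close>.\<close>

section \<open>Partial derivatives in the parameter plane\<close>

lemma ds_eqI: "((\<lambda>u. F (u, snd q)) has_real_derivative D) (at (fst q)) \<Longrightarrow> ds F q = D"
  by (simp add: ds_def vector_derivative_at has_real_derivative_iff_has_vector_derivative)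

lemma dt_eqI: "((\<lambda>v. F (fst q, v)) has_real_derivative D) (at (snd q)) \<Longrightarrow> dt F q = D"
  by (simp add: dt_def vector_derivative_at has_real_derivative_iff_has_vector_derivative)

lemma open_slice_fst: "open S \<Longrightarrow> open {u. (u, c) \<in> S}"
  using open_vimage[of S "\<lambda>u. (u, c)"] by (simp add: vimage_def continuous_on_Pair)

lemma open_slice_snd: "open S \<Longrightarrow> open {v. (c, v) \<in> S}"
  using open_vimage[of S "\<lambda>v. (c, v)"] by (simp add: vimage_def continuous_on_Pair)

lemma vector_derivative_cong_open:
  assumes "open A" "x \<in> A" "\<And>y. y \<in> A \<Longrightarrow> f y = g y"
  shows "vector_derivative f (at x) = vector_derivative g (at x)"
  by (rule vector_derivative_cong_eq)
    (use eventually_nhds_in_open[OF assms(1,2)] assms(3) in \<open>auto elim: eventually_mono\<close>)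

lemma ds_cong_open:
  assumes "open S" "q \<in> S" "\<And>q. q \<in> S \<Longrightarrow> F q = G q"
  shows "ds F q = ds G q"
proof -
  have "vector_derivative (\<lambda>u. F (u, snd q)) (at (fst q))
      = vector_derivative (\<lambda>u. G (u, snd q)) (at (fst q))"
  proof (rule vector_derivative_cong_open[OF open_slice_fst[OF assms(1)]])
    show "fst q \<in> {u. (u, snd q) \<in> S}" using assms(2) by simp
  qed (use assms(3) in blast)
  then show ?thesis by (simp add: ds_def)
qed

lemma dt_cong_open:
  assumes "open S" "q \<in> S" "\<And>q. q \<in> S \<Longrightarrow> F q = G q"
  shows "dt F q = dt G q"
proof -
  have "vector_derivative (\<lambda>v. F (fst q, v)) (at (snd q))
      = vector_derivative (\<lambda>v. G (fst q, v)) (at (snd q))"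
  proof (rule vector_derivative_cong_open[OF open_slice_snd[OF assms(1)]])
    show "snd q \<in> {v. (fst q, v) \<in> S}" using assms(2) by simp
  qed (use assms(3) in blast)
  then show ?thesis by (simp add: dt_def)
qed

lemma ds_linear:
  assumes "bounded_linear L" "(\<lambda>u. F (u, snd q)) differentiable at (fst q)"
  shows "ds (\<lambda>q. L (F q)) q = L (ds F q)"
proof -
  have "((\<lambda>u. F (u, snd q)) has_vector_derivative ds F q) (at (fst q))"
    using assms(2) unfolding ds_def vector_derivative_works .
  then show ?thesis
    unfolding ds_def[of "\<lambda>q. L (F q)"]
    by (intro vector_derivative_at bounded_linear.has_vector_derivative[OF assms(1)])
qed

lemma dt_linear:
  assumes "bounded_linear L" "(\<lambda>v. F (fst q, v)) differentiable at (snd q)"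
  shows "dt (\<lambda>q. L (F q)) q = L (dt F q)"
proof -
  have "((\<lambda>v. F (fst q, v)) has_vector_derivative dt F q) (at (snd q))"
    using assms(2) unfolding dt_def vector_derivative_works .
  then show ?thesis
    unfolding dt_def[of "\<lambda>q. L (F q)"]
    by (intro vector_derivative_at bounded_linear.has_vector_derivative[OF assms(1)])
qed

definition has_partials :: "(real \<times> real \<Rightarrow> real) \<Rightarrow> real \<times> real \<Rightarrow> bool" where
  "has_partials f q \<longleftrightarrow>
     ((\<lambda>u. f (u, snd q)) has_real_derivative ds f q) (at (fst q)) \<and>
     ((\<lambda>v. f (fst q, v)) has_real_derivative dt f q) (at (snd q))"

lemma has_partialsI:
  assumes "((\<lambda>u. f (u, snd p)) has_real_derivative Ds) (at (fst p))"
    and "((\<lambda>v. f (fst p, v)) has_real_derivative Dt) (at (snd p))"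
  shows "has_partials f p" "ds f p = Ds" "dt f p = Dt"
proof -
  show ds: "ds f p = Ds" using ds_eqI assms(1) .
  show dt: "dt f p = Dt" using dt_eqI assms(2) .
  show "has_partials f p" unfolding has_partials_def ds dt using assms ..
qed

lemma has_partialsD:
  assumes "has_partials f (s, t)"
  shows "((\<lambda>u. f (u, t)) has_real_derivative ds f (s, t)) (at s)"
    and "((\<lambda>v. f (s, v)) has_real_derivative dt f (s, t)) (at t)"
  using assms by (simp_all add: has_partials_def)

lemma has_partials_const [simp]: "has_partials (\<lambda>q. c) p"
  and ds_const [simp]: "ds (\<lambda>q. c) p = 0"
  and dt_const [simp]: "dt (\<lambda>q. c) p = 0"
  using has_partialsI[OF DERIV_const DERIV_const] by auto

lemma
  assumes f: "has_partials f p" and g: "has_partials g p"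
  shows has_partials_add [simp]: "has_partials (\<lambda>q. f q + g q) p"
    and ds_add [simp]: "ds (\<lambda>q. f q + g q) p = ds f p + ds g p"
    and dt_add [simp]: "dt (\<lambda>q. f q + g q) p = dt f p + dt g p"
proof -
  obtain s t where p: "p = (s, t)" by (cases p)
  have "((\<lambda>u. f (u, t) + g (u, t)) has_real_derivative ds f p + ds g p) (at s)"
    "((\<lambda>v. f (s, v) + g (s, v)) has_real_derivative dt f p + dt g p) (at t)"
    using has_partialsD[OF f[unfolded p]] has_partialsD[OF g[unfolded p]] p
    by (auto intro!: derivative_eq_intros)
  then show "has_partials (\<lambda>q. f q + g q) p"
    and "ds (\<lambda>q. f q + g q) p = ds f p + ds g p" "dt (\<lambda>q. f q + g q) p = dt f p + dt g p"
    using has_partialsI[where f = "\<lambda>q. f q + g q" and p = p] p by auto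
qed

lemma
  assumes f: "has_partials f p" and g: "has_partials g p"
  shows has_partials_mult [simp]: "has_partials (\<lambda>q. f q * g q) p"
    and ds_mult [simp]: "ds (\<lambda>q. f q * g q) p = ds f p * g p + f p * ds g p"
    and dt_mult [simp]: "dt (\<lambda>q. f q * g q) p = dt f p * g p + f p * dt g p"
proof -
  obtain s t where p: "p = (s, t)" by (cases p)
  have "((\<lambda>u. f (u, t) * g (u, t)) has_real_derivative ds f p * g p + f p * ds g p) (at s)"
    "((\<lambda>v. f (s, v) * g (s, v)) has_real_derivative dt f p * g p + f p * dt g p) (at t)"
    using has_partialsD[OF f[unfolded p]] has_partialsD[OF g[unfolded p]] p
    by (auto intro!: derivative_eq_intros)
  then show "has_partials (\<lambda>q. f q * g q) p"
    and "ds (\<lambda>q. f q * g q) p = ds f p * g p + f p * ds g p"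
    and "dt (\<lambda>q. f q * g q) p = dt f p * g p + f p * dt g p"
    using has_partialsI[where f = "\<lambda>q. f q * g q" and p = p] p by auto
qed

lemma
  assumes "(f has_real_derivative f') (at (fst p))"
  shows has_partials_fst_comp: "has_partials (\<lambda>q. f (fst q)) p"
    and ds_fst_comp: "ds (\<lambda>q. f (fst q)) p = f'"
    and dt_fst_comp: "dt (\<lambda>q. f (fst q)) p = 0"
  using has_partialsI[where f = "\<lambda>q. f (fst q)" and p = p and Ds = f' and Dt = 0] assms by simp_all

section \<open>Symmetry of mixed partials\<close>

lemma second_difference_mean_value:
  fixes f :: "real \<times> real \<Rightarrow> real"
  assumes h: "0 < h"
    and ds_f: "\<And>u v. s \<le> u \<Longrightarrow> u \<le> s + h \<Longrightarrow> t \<le> v \<Longrightarrow> v \<le> t + h \<Longrightarrow>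
      ((\<lambda>u. f (u, v)) has_real_derivative ds f (u, v)) (at u)"
    and dt_ds_f: "\<And>u v. s \<le> u \<Longrightarrow> u \<le> s + h \<Longrightarrow> t \<le> v \<Longrightarrow> v \<le> t + h \<Longrightarrow>
      ((\<lambda>v. ds f (u, v)) has_real_derivative dt (ds f) (u, v)) (at v)"
  shows "\<exists>x y. s < x \<and> x < s + h \<and> t < y \<and> y < t + h \<and>
    f (s + h, t + h) - f (s + h, t) - f (s, t + h) + f (s, t) = h\<^sup>2 * dt (ds f) (x, y)"
proof -
  have "((\<lambda>u. f (u, t + h) - f (u, t)) has_real_derivative ds f (u, t + h) - ds f (u, t)) (at u)"
    if "s \<le> u" "u \<le> s + h" for u
    using ds_f[of u "t + h"] ds_f[of u t] that h by (auto intro!: derivative_eq_intros)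
  from MVT2[of s "s + h", OF _ this] h obtain x where x: "s < x" "x < s + h"
    "(f (s + h, t + h) - f (s + h, t)) - (f (s, t + h) - f (s, t))
      = h * (ds f (x, t + h) - ds f (x, t))"
    by auto
  have "((\<lambda>v. ds f (x, v)) has_real_derivative dt (ds f) (x, v)) (at v)"
    if "t \<le> v" "v \<le> t + h" for v
    using dt_ds_f[of x v] that x by simp
  from MVT2[of t "t + h", OF _ this] h obtain y where y: "t < y" "y < t + h"
    "ds f (x, t + h) - ds f (x, t) = h * dt (ds f) (x, y)"
    by auto
  show ?thesis
    using x y by (auto simp: power2_eq_square algebra_simps)
qed

lemma second_difference_tendsto_mixed_partial:
  fixes f :: "real \<times> real \<Rightarrow> real"
  assumes r: "r > 0"
    and ds_f: "\<And>q. dist q (s, t) < r \<Longrightarrow>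
      ((\<lambda>u. f (u, snd q)) has_real_derivative ds f q) (at (fst q))"
    and dt_ds_f: "\<And>q. dist q (s, t) < r \<Longrightarrow>
      ((\<lambda>v. ds f (fst q, v)) has_real_derivative dt (ds f) q) (at (snd q))"
    and cont: "isCont (dt (ds f)) (s, t)"
  shows "((\<lambda>h. (f (s + h, t + h) - f (s + h, t) - f (s, t + h) + f (s, t)) / h\<^sup>2)
           \<longlongrightarrow> dt (ds f) (s, t)) (at_right 0)"
proof -
  let ?D = "dt (ds f)"
  have near: "dist (u, v) (s, t) < r"
    if "s \<le> u" "u \<le> s + h" "t \<le> v" "v \<le> t + h" "h < r / 2" for u v h
  proof -
    have "dist (u, v) (s, t) \<le> \<bar>u - s\<bar> + \<bar>v - t\<bar>"
      using sqrt_sum_squares_le_sum_abs[of "u - s" "v - t"]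
      by (simp add: dist_Pair_Pair dist_real_def)
    also have "\<dots> < r" using that by auto
    finally show ?thesis .
  qed
  have mvt: "\<exists>z. s < fst z \<and> fst z < s + h \<and> t < snd z \<and> snd z < t + h \<and>
      f (s + h, t + h) - f (s + h, t) - f (s, t + h) + f (s, t) = h\<^sup>2 * ?D z"
    if h: "0 < h" "h < r / 2" for h
    using second_difference_mean_value[of h s t f] ds_f dt_ds_f near h by fastforce
  then obtain Z where Z: "\<And>h. h \<in> {0<..<r / 2} \<Longrightarrow>
      s < fst (Z h) \<and> fst (Z h) < s + h \<and> t < snd (Z h) \<and> snd (Z h) < t + h \<and>
      f (s + h, t + h) - f (s + h, t) - f (s, t + h) + f (s, t) = h\<^sup>2 * ?D (Z h)"
    by (metis greaterThanLessThan_iff)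
  have ev: "eventually (\<lambda>h. h \<in> {0<..<r / 2}) (at_right (0::real))"
    using r by (auto simp: eventually_at_right_field intro: exI[of _ "r / 2"])
  have "((\<lambda>h. fst (Z h)) \<longlongrightarrow> s) (at_right 0)"
  proof (rule tendsto_sandwich[of "\<lambda>_. s" _ _ "\<lambda>h. s + h"])
    show "\<forall>\<^sub>F h in at_right 0. s \<le> fst (Z h)" "\<forall>\<^sub>F h in at_right 0. fst (Z h) \<le> s + h"
      using ev by (eventually_elim, use Z in force)+
    show "((\<lambda>h. s + h) \<longlongrightarrow> s) (at_right 0)"
      by (rule tendsto_eq_intros, rule tendsto_const, rule tendsto_ident_at, simp)
  qed simp
  moreover have "((\<lambda>h. snd (Z h)) \<longlongrightarrow> t) (at_right 0)"
  proof (rule tendsto_sandwich[of "\<lambda>_. t" _ _ "\<lambda>h. t + h"])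
    show "\<forall>\<^sub>F h in at_right 0. t \<le> snd (Z h)" "\<forall>\<^sub>F h in at_right 0. snd (Z h) \<le> t + h"
      using ev by (eventually_elim, use Z in force)+
    show "((\<lambda>h. t + h) \<longlongrightarrow> t) (at_right 0)"
      by (rule tendsto_eq_intros, rule tendsto_const, rule tendsto_ident_at, simp)
  qed simp
  ultimately have "((\<lambda>h. ?D (Z h)) \<longlongrightarrow> ?D (s, t)) (at_right 0)"
    using isCont_tendsto_compose[OF cont] tendsto_Pair by fastforce
  moreover have "\<forall>\<^sub>F h in at_right 0.
      ?D (Z h) = (f (s + h, t + h) - f (s + h, t) - f (s, t + h) + f (s, t)) / h\<^sup>2"
    using ev by eventually_elim (use Z in auto)
  ultimately show ?thesis by (rule Lim_transform_eventually)
qed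

text \<open>Both mixed partials are limits of the same second difference.\<close>

lemma mixed_partials_commute:
  fixes f :: "real \<times> real \<Rightarrow> real"
  assumes r: "r > 0"
    and partials: "\<And>q. dist q p < r \<Longrightarrow> has_partials f q"
    and dt_ds_f: "\<And>q. dist q p < r \<Longrightarrow>
      ((\<lambda>v. ds f (fst q, v)) has_real_derivative dt (ds f) q) (at (snd q))"
    and ds_dt_f: "\<And>q. dist q p < r \<Longrightarrow>
      ((\<lambda>u. dt f (u, snd q)) has_real_derivative ds (dt f) q) (at (fst q))"
    and cont: "isCont (dt (ds f)) p" "isCont (ds (dt f)) p"
  shows "dt (ds f) p = ds (dt f) p"
proof -
  obtain s t where p: "p = (s, t)" by (cases p)
  define g where "g = (\<lambda>q. f (snd q, fst q))"
  have ds_g: "ds g q = dt f (snd q, fst q)"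
    and dt_ds_g: "dt (ds g) q = ds (dt f) (snd q, fst q)" for q
    by (simp_all add: ds_def dt_def g_def)
  have dist_swap: "dist (snd q, fst q) (s, t) = dist q (t, s)" for q
    by (cases q) (simp add: dist_Pair_Pair add.commute)
  let ?Q = "\<lambda>h. (f (s + h, t + h) - f (s + h, t) - f (s, t + h) + f (s, t)) / h\<^sup>2"
  have "(?Q \<longlongrightarrow> dt (ds f) (s, t)) (at_right 0)"
    by (rule second_difference_tendsto_mixed_partial[OF r])
      (use partials dt_ds_f cont p in \<open>auto simp: has_partials_def\<close>)
  moreover have "((\<lambda>h. (g (t + h, s + h) - g (t + h, s) - g (t, s + h) + g (t, s)) / h\<^sup>2)
      \<longlongrightarrow> dt (ds g) (t, s)) (at_right 0)"
  proof (rule second_difference_tendsto_mixed_partial[OF r])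
    fix q :: "real \<times> real"
    assume "dist q (t, s) < r"
    then have q: "dist (snd q, fst q) p < r" using dist_swap p by simp
    show "((\<lambda>u. g (u, snd q)) has_real_derivative ds g q) (at (fst q))"
      unfolding ds_g using partials[OF q] by (simp add: g_def has_partials_def)
    show "((\<lambda>v. ds g (fst q, v)) has_real_derivative dt (ds g) q) (at (snd q))"
      using ds_dt_f[OF q] by (simp add: ds_g dt_ds_g)
  next
    have "isCont (\<lambda>q. ds (dt f) (snd q, fst q)) (t, s)"
      using cont(2) p
      by (intro isCont_o2[where f = "\<lambda>q. (snd q, fst q)" and g = "ds (dt f)", simplified o_def])
        (auto intro!: continuous_intros)
    then show "isCont (dt (ds g)) (t, s)" by (simp add: dt_ds_g[abs_def])
  qed
  then have "(?Q \<longlongrightarrow> ds (dt f) (s, t)) (at_right 0)"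
    using dt_ds_g[of "(t, s)"] by (simp add: g_def algebra_simps)
  ultimately show ?thesis
    using tendsto_unique[OF trivial_limit_at_right_real] p by blast
qed

lemma smooth2_on_has_partials:
  fixes f :: "real \<times> real \<Rightarrow> real"
  assumes "smooth2_on S f" "p \<in> S"
  shows "has_partials (pd bs f) p"
proof -
  have "(\<lambda>u. pd bs f (u, snd p)) differentiable at (fst p)"
    "(\<lambda>v. pd bs f (fst p, v)) differentiable at (snd p)"
    using assms by (auto simp: smooth2_on_def)
  then show ?thesis
    by (simp add: has_partials_def ds_def dt_def vector_derivative_works
        has_real_derivative_iff_has_vector_derivative)
qed

lemma smooth2_on_mixed_partials:
  fixes f :: "real \<times> real \<Rightarrow> real"
  assumes S: "open S" and f: "smooth2_on S f" and p: "p \<in> S"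
  shows "dt (ds f) p = ds (dt f) p"
proof -
  obtain r where r: "r > 0" "ball p r \<subseteq> S" using S p open_contains_ball by blast
  have inS: "q \<in> S" if "dist q p < r" for q using r that by (auto simp: dist_commute)
  have "continuous_on S (pd bs f)" for bs
    using f by (simp add: smooth2_on_def)
  from this[of "[False, True]"] this[of "[True, False]"]
  have cont: "isCont (dt (ds f)) p" "isCont (ds (dt f)) p"
    using continuous_on_eq_continuous_at[OF S] p by auto
  show ?thesis
  proof (rule mixed_partials_commute[OF r(1) _ _ _ cont])
    fix q assume "dist q p < r"
    then have q: "q \<in> S" by (rule inS)
    show "has_partials f q" using smooth2_on_has_partials[OF f q, of "[]"] by simp
    show "((\<lambda>v. ds f (fst q, v)) has_real_derivative dt (ds f) q) (at (snd q))"
      using smooth2_on_has_partials[OF f q, of "[True]"] by (simp add: has_partials_def)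
    show "((\<lambda>u. dt f (u, snd q)) has_real_derivative ds (dt f) q) (at (fst q))"
      using smooth2_on_has_partials[OF f q, of "[False]"] by (simp add: has_partials_def)
  qed
qed

lemma pd_linear:
  assumes S: "open S" and E: "smooth2_on S E" and L: "bounded_linear L" and q: "q \<in> S"
  shows "pd bs (\<lambda>q. L (E q)) q = L (pd bs E q)"
  using q
proof (induction bs arbitrary: q)
  case Nil
  then show ?case by simp
next
  case (Cons b bs)
  have diff: "(\<lambda>u. pd bs E (u, snd q)) differentiable at (fst q)"
    "(\<lambda>v. pd bs E (fst q, v)) differentiable at (snd q)"
    using E Cons.prems by (auto simp: smooth2_on_def)
  have "ds (pd bs (\<lambda>q. L (E q))) q = ds (\<lambda>q. L (pd bs E q)) q"
    "dt (pd bs (\<lambda>q. L (E q))) q = dt (\<lambda>q. L (pd bs E q)) q"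
    using Cons by (auto intro: ds_cong_open[OF S] dt_cong_open[OF S])
  then show ?case
    using ds_linear[OF L diff(1)] dt_linear[OF L diff(2)] by simp
qed

lemma smooth2_on_linear:
  assumes S: "open S" and E: "smooth2_on S E" and L: "bounded_linear L"
  shows "smooth2_on S (\<lambda>q. L (E q))"
  unfolding smooth2_on_def
proof (intro allI conjI ballI)
  fix bs
  have "continuous_on S (\<lambda>q. L (pd bs E q))"
    using E L
    by (auto simp: smooth2_on_def intro: continuous_on_compose2[OF linear_continuous_on[OF L]])
  then show "continuous_on S (pd bs (\<lambda>q. L (E q)))"
    by (rule continuous_on_cong[THEN iffD1, rotated 2]) (use pd_linear[OF S E L] in auto)
  fix p assume p: "p \<in> S"
  have diff: "(\<lambda>u. pd bs E (u, snd p)) differentiable at (fst p)"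
    "(\<lambda>v. pd bs E (fst p, v)) differentiable at (snd p)"
    using E p by (auto simp: smooth2_on_def)
  show "(\<lambda>u. pd bs (\<lambda>q. L (E q)) (u, snd p)) differentiable at (fst p)"
  proof (rule differentiableI_vector,
      rule has_vector_derivative_transform_within_open[OF _ open_slice_fst[OF S, of "snd p"]])
    show "((\<lambda>u. L (pd bs E (u, snd p))) has_vector_derivative L (ds (pd bs E) p)) (at (fst p))"
      using diff(1) unfolding ds_def vector_derivative_works
      by (rule bounded_linear.has_vector_derivative[OF L])
  qed (use p pd_linear[OF S E L] in auto)
  show "(\<lambda>v. pd bs (\<lambda>q. L (E q)) (fst p, v)) differentiable at (snd p)"
  proof (rule differentiableI_vector,
      rule has_vector_derivative_transform_within_open[OF _ open_slice_snd[OF S, of "fst p"]])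
    show "((\<lambda>v. L (pd bs E (fst p, v))) has_vector_derivative L (dt (pd bs E) p)) (at (snd p))"
      using diff(2) unfolding dt_def vector_derivative_works
      by (rule bounded_linear.has_vector_derivative[OF L])
  qed (use p pd_linear[OF S E L] in auto)
qed

abbreviation cs :: "(real \<times> real \<Rightarrow> real \<times> real) \<Rightarrow> real \<times> real \<Rightarrow> real" where
  "cs V \<equiv> \<lambda>q. fst (V q)"

abbreviation ct :: "(real \<times> real \<Rightarrow> real \<times> real) \<Rightarrow> real \<times> real \<Rightarrow> real" where
  "ct V \<equiv> \<lambda>q. snd (V q)"

lemma smooth2_on_coeffs:
  assumes "open S" "smooth2_on S V" "p \<in> S"
  shows "has_partials (cs V) p" "has_partials (ct V) p"
    and "has_partials (ds (cs V)) p" "has_partials (dt (cs V)) p"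
    and "has_partials (ds (ct V)) p" "has_partials (dt (ct V)) p"
    and "dt (ds (cs V)) p = ds (dt (cs V)) p" "dt (ds (ct V)) p = ds (dt (ct V)) p"
proof -
  have V: "smooth2_on S (cs V)" "smooth2_on S (ct V)"
    using smooth2_on_linear[OF assms(1,2)] bounded_linear_fst bounded_linear_snd by auto
  from smooth2_on_has_partials[OF V(1) assms(3)] smooth2_on_has_partials[OF V(2) assms(3)]
  show "has_partials (cs V) p" "has_partials (ct V) p"
    and "has_partials (ds (cs V)) p" "has_partials (dt (cs V)) p"
    and "has_partials (ds (ct V)) p" "has_partials (dt (ct V)) p"
    by (metis pd.simps)+
  show "dt (ds (cs V)) p = ds (dt (cs V)) p" "dt (ds (ct V)) p = ds (dt (ct V)) p"
    using smooth2_on_mixed_partials[OF assms(1) V(1) assms(3)]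
      smooth2_on_mixed_partials[OF assms(1) V(2) assms(3)] .
qed

lemma lie_coeffs:
  assumes S: "open S" and X: "smooth2_on S X" and Y: "smooth2_on S Y" and p: "p \<in> S"
  shows "lie X Y p = (dirD X (cs Y) p - dirD Y (cs X) p, dirD X (ct Y) p - dirD Y (ct X) p)"
proof -
  have "fst (ds V p) = ds (cs V) p" "snd (ds V p) = ds (ct V) p"
    "fst (dt V p) = dt (cs V) p" "snd (dt V p) = dt (ct V) p"
    if "smooth2_on S V" for V :: "real \<times> real \<Rightarrow> real \<times> real"
    using pd_linear[OF S that bounded_linear_fst p] pd_linear[OF S that bounded_linear_snd p]
    by (metis pd.simps)+
  from this[OF X] this[OF Y] show ?thesis
    by (simp add: lie_def dirD_def prod_eq_iff)
qed

lemma ind_conn_cong_open: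
  assumes "open S" "p \<in> S" "\<And>q. q \<in> S \<Longrightarrow> F q = G q"
  shows "ind_conn C \<psi> X F p = ind_conn C \<psi> X G p"
  using ds_cong_open[OF assms] dt_cong_open[OF assms] assms(2,3)
  by (simp add: ind_conn_def snm_conn_def dirD_def)

lemma cross3_expansion:
  fixes a b r :: "real^3"
  shows "(norm (cross3 a b))\<^sup>2 *\<^sub>R r =
    ((b \<bullet> b) * (r \<bullet> a) - (a \<bullet> b) * (r \<bullet> b)) *\<^sub>R a
    + ((a \<bullet> a) * (r \<bullet> b) - (a \<bullet> b) * (r \<bullet> a)) *\<^sub>R b
    + (r \<bullet> cross3 a b) *\<^sub>R cross3 a b"
  unfolding power2_norm_eq_inner
  by (simp add: cross3_def inner_vec_def sum_3 vec_eq_iff forall_3 vector_def algebra_simps)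

lemma gram_det_orthonormal:
  fixes u w :: "'a::real_inner"
  assumes uw: "u \<bullet> w = 0" and w: "w \<bullet> w = 1"
    and n1: "norm (a *\<^sub>R u + b *\<^sub>R w) = 1" and n2: "norm (c *\<^sub>R u + d *\<^sub>R w) = 1"
    and orth: "(a *\<^sub>R u + b *\<^sub>R w) \<bullet> (c *\<^sub>R u + d *\<^sub>R w) = 0"
  shows "(u \<bullet> u) * (a * d - b * c)\<^sup>2 = 1"
proof -
  have inner: "(x *\<^sub>R u + y *\<^sub>R w) \<bullet> (x' *\<^sub>R u + y' *\<^sub>R w) = x * x' * (u \<bullet> u) + y * y'"
    for x y x' y'
    using uw w by (simp add: inner_add_left inner_add_right inner_commute algebra_simps)
  have "a * a * (u \<bullet> u) + b * b = 1" "c * c * (u \<bullet> u) + d * d = 1"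
    "a * c * (u \<bullet> u) + b * d = 0"
    using n1 n2 orth by (simp_all add: norm_eq_1 inner)
  moreover have "(u \<bullet> u) * (a * d - b * c)\<^sup>2 =
      (a * a * (u \<bullet> u) + b * b) * (c * c * (u \<bullet> u) + d * d) - (a * c * (u \<bullet> u) + b * d)\<^sup>2"
    by (simp add: power2_eq_square algebra_simps)
  ultimately show ?thesis by simp
qed

section \<open>Cylindrical surfaces\<close>

locale cylinder =
  fixes C w :: "real^3" and \<gamma> :: "real \<Rightarrow> real^3" and I :: "real set"
  assumes C_unit: "norm C = 1" and w_unit: "norm w = 1" and w_parallel: "\<exists>c. w = c *\<^sub>R C"
    and I_open: "open I" and \<gamma>_smooth: "smooth1_on I \<gamma>"
    and \<gamma>_regular: "\<forall>s\<in>I. vector_derivative \<gamma> (at s) \<noteq> 0"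
    and \<gamma>_planar: "\<exists>c. \<forall>s\<in>I. \<gamma> s \<bullet> w = c"
begin

abbreviation \<psi> :: "real \<times> real \<Rightarrow> real^3" where
  "\<psi> \<equiv> \<lambda>(s', t'). \<gamma> s' + t' *\<^sub>R w"

abbreviation U :: "(real \<times> real) set" where
  "U \<equiv> I \<times> UNIV"

definition \<gamma>' :: "real \<Rightarrow> real^3" where
  "\<gamma>' s = vector_derivative \<gamma> (at s)"

definition \<gamma>'' :: "real \<Rightarrow> real^3" where
  "\<gamma>'' s = vector_derivative \<gamma>' (at s)"

definition \<kappa> :: "real \<Rightarrow> real" where
  "\<kappa> s = (\<gamma>' s \<bullet> \<gamma>'' s) / (\<gamma>' s \<bullet> \<gamma>' s)"

definition \<epsilon> :: real where
  "\<epsilon> = C \<bullet> w"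

lemma open_U: "open U"
  using I_open by (simp add: open_Times)

lemma curve_differentiable:
  assumes "s \<in> I"
  shows "\<gamma> differentiable at s" "\<gamma>' differentiable at s" "\<gamma>'' differentiable at s"
proof -
  have "(vderiv ^^ n) \<gamma> differentiable at s" for n
    using \<gamma>_smooth assms unfolding smooth1_on_def by blast
  moreover have "(vderiv ^^ 1) \<gamma> = \<gamma>'"
    by (simp add: fun_eq_iff vderiv_def \<gamma>'_def)
  moreover from this have "(vderiv ^^ 2) \<gamma> = \<gamma>''"
    by (simp add: numeral_2_eq_2) (simp add: fun_eq_iff vderiv_def \<gamma>''_def)
  ultimately show "\<gamma> differentiable at s" "\<gamma>' differentiable at s" "\<gamma>'' differentiable at s"
    by (metis funpow_0)+
qed

lemma has_vector_derivative_\<gamma>: "s \<in> I \<Longrightarrow> (\<gamma> has_vector_derivative \<gamma>' s) (at s)"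
  using curve_differentiable(1) vector_derivative_works \<gamma>'_def by metis

lemma has_vector_derivative_\<gamma>': "s \<in> I \<Longrightarrow> (\<gamma>' has_vector_derivative \<gamma>'' s) (at s)"
  using curve_differentiable(2) vector_derivative_works \<gamma>''_def by metis

lemma derivative_orthogonal_w:
  assumes f: "(f has_vector_derivative f') (at s)" and s: "s \<in> I"
    and const: "\<And>u. u \<in> I \<Longrightarrow> f u \<bullet> w = c"
  shows "f' \<bullet> w = 0"
proof -
  have "((\<lambda>u. f u \<bullet> w) has_real_derivative f' \<bullet> w) (at s)"
    using bounded_linear.has_vector_derivative[OF bounded_linear_inner_left f]
    by (simp add: has_real_derivative_iff_has_vector_derivative)
  moreover have "((\<lambda>u. f u \<bullet> w) has_real_derivative 0) (at s)"
    by (rule has_field_derivative_transform_within_open[OF DERIV_const I_open s]) (use const in auto)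
  ultimately show ?thesis by (rule DERIV_unique)
qed

lemma \<gamma>'_orthogonal_w: "s \<in> I \<Longrightarrow> \<gamma>' s \<bullet> w = 0"
  using \<gamma>_planar derivative_orthogonal_w[OF has_vector_derivative_\<gamma>] by blast

lemma \<gamma>''_orthogonal_w: "s \<in> I \<Longrightarrow> \<gamma>'' s \<bullet> w = 0"
  using derivative_orthogonal_w[OF has_vector_derivative_\<gamma>' _ \<gamma>'_orthogonal_w] by blast

lemma \<gamma>'_nonzero: "s \<in> I \<Longrightarrow> \<gamma>' s \<noteq> 0"
  using \<gamma>_regular \<gamma>'_def by auto

lemma C_eq: "C = \<epsilon> *\<^sub>R w" and \<epsilon>_square: "\<epsilon> * \<epsilon> = 1"
proof -
  obtain c where c: "w = c *\<^sub>R C" using w_parallel by blast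
  have "C \<bullet> C = 1" using C_unit by (simp add: norm_eq_1)
  then have "\<epsilon> = c" unfolding \<epsilon>_def using c by simp
  moreover have "\<bar>c\<bar> = 1" using w_unit C_unit c by simp
  ultimately show "\<epsilon> * \<epsilon> = 1" by (metis abs_mult_self_eq mult_1)
  then show "C = \<epsilon> *\<^sub>R w" using c \<open>\<epsilon> = c\<close> by simp
qed

lemma inner_C: "C \<bullet> v = \<epsilon> * (w \<bullet> v)"
  using C_eq by (metis inner_scaleR_left)

lemma ds_\<psi>: "fst q \<in> I \<Longrightarrow> ds \<psi> q = \<gamma>' (fst q)"
  unfolding ds_def
  by (rule vector_derivative_at) (auto intro!: derivative_eq_intros has_vector_derivative_\<gamma>)

lemma dt_\<psi>: "dt \<psi> q = w"
  unfolding dt_def by (rule vector_derivative_at) (auto intro!: derivative_eq_intros)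

lemma push_\<psi>: "q \<in> U \<Longrightarrow> push \<psi> V q = cs V q *\<^sub>R \<gamma>' (fst q) + ct V q *\<^sub>R w"
  by (cases q) (simp add: push_def ds_\<psi> dt_\<psi>)

definition \<nu> :: "real \<Rightarrow> real^3" where
  "\<nu> s = (1 / norm (cross3 (\<gamma>' s) w)) *\<^sub>R cross3 (\<gamma>' s) w"

lemma unit_normal_\<psi>: "s \<in> I \<Longrightarrow> unit_normal \<psi> (s, t) = \<nu> s"
  unfolding unit_normal_def \<nu>_def Let_def using ds_\<psi>[of "(s, t)"] dt_\<psi>[of "(s, t)"] by simp

lemma cross3_\<gamma>'_w_nonzero:
  assumes s: "s \<in> I"
  shows "cross3 (\<gamma>' s) w \<noteq> 0"
proof
  assume "cross3 (\<gamma>' s) w = 0"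
  then have "(\<gamma>' s \<bullet> w)\<^sup>2 = (norm (\<gamma>' s))\<^sup>2"
    using norm_cross_dot[of "\<gamma>' s" w] w_unit by simp
  then show False using \<gamma>'_orthogonal_w[OF s] \<gamma>'_nonzero[OF s] by simp
qed

lemma \<nu>_orthonormal:
  assumes s: "s \<in> I"
  shows "\<gamma>' s \<bullet> \<nu> s = 0" "w \<bullet> \<nu> s = 0" "\<nu> s \<bullet> \<nu> s = 1"
    and "cross3 (\<gamma>' s) w = norm (cross3 (\<gamma>' s) w) *\<^sub>R \<nu> s"
  using cross3_\<gamma>'_w_nonzero[OF s]
  by (simp_all add: \<nu>_def dot_cross_self norm_eq_1 power2_norm_eq_inner[symmetric] power2_eq_square)

lemma tangential_part_\<gamma>'':
  assumes s: "s \<in> I"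
  shows "\<gamma>'' s - (\<gamma>'' s \<bullet> \<nu> s) *\<^sub>R \<nu> s = \<kappa> s *\<^sub>R \<gamma>' s"
proof -
  note normal = \<nu>_orthonormal[OF s]
  have normal': "\<nu> s \<bullet> \<gamma>' s = 0" "\<nu> s \<bullet> w = 0"
    using normal(1,2) by (simp_all add: inner_commute)
  define r where "r = \<gamma>'' s - \<kappa> s *\<^sub>R \<gamma>' s - (\<gamma>'' s \<bullet> \<nu> s) *\<^sub>R \<nu> s"
  \<comment> \<open>\<open>r\<close> is orthogonal to the frame \<open>\<gamma>' s, w, \<nu> s\<close>; to \<open>w\<close> because \<open>\<gamma>''\<close> is.\<close>
  have "r \<bullet> \<gamma>' s = 0"
    unfolding r_def \<kappa>_def using normal' \<gamma>'_nonzero[OF s]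
    by (simp add: inner_diff_left inner_commute[of "\<gamma>'' s" "\<gamma>' s"])
  moreover have "r \<bullet> w = 0"
    unfolding r_def using normal' \<gamma>'_orthogonal_w[OF s] \<gamma>''_orthogonal_w[OF s]
    by (simp add: inner_diff_left)
  moreover have "r \<bullet> cross3 (\<gamma>' s) w = 0"
  proof -
    have "r \<bullet> \<nu> s = 0"
      unfolding r_def using normal(1,3) by (simp add: inner_diff_left)
    then show ?thesis using arg_cong[OF normal(4), of "\<lambda>x. r \<bullet> x"] by simp
  qed
  ultimately have "(norm (cross3 (\<gamma>' s) w))\<^sup>2 *\<^sub>R r = 0"
    using cross3_expansion[of "\<gamma>' s" w r] by simp
  then have "r = 0" using cross3_\<gamma>'_w_nonzero[OF s] by simp
  then show ?thesis unfolding r_def by (simp add: algebra_simps)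
qed

lemma tang_\<psi>:
  assumes s: "s \<in> I"
  shows "tang \<psi> (s, t) (a *\<^sub>R \<gamma>' s + b *\<^sub>R w + e *\<^sub>R \<gamma>'' s)
    = (a + e * \<kappa> s) *\<^sub>R \<gamma>' s + b *\<^sub>R w"
proof -
  have "tang \<psi> (s, t) (a *\<^sub>R \<gamma>' s + b *\<^sub>R w + e *\<^sub>R \<gamma>'' s)
      = a *\<^sub>R \<gamma>' s + b *\<^sub>R w + e *\<^sub>R (\<gamma>'' s - (\<gamma>'' s \<bullet> \<nu> s) *\<^sub>R \<nu> s)"
    unfolding tang_def unit_normal_\<psi>[OF s] using \<nu>_orthonormal(1,2)[OF s]
    by (simp add: inner_add_left algebra_simps)
  also have "\<dots> = (a + e * \<kappa> s) *\<^sub>R \<gamma>' s + b *\<^sub>R w"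
    unfolding tangential_part_\<gamma>''[OF s] by (simp add: algebra_simps)
  finally show ?thesis .
qed

lemma \<kappa>_has_derivative: "s \<in> I \<Longrightarrow> (\<kappa> has_real_derivative vector_derivative \<kappa> (at s)) (at s)"
proof -
  assume s: "s \<in> I"
  have "(\<lambda>u. (\<gamma>' u \<bullet> \<gamma>'' u) / (\<gamma>' u \<bullet> \<gamma>' u)) differentiable at s"
    using curve_differentiable[OF s] \<gamma>'_nonzero[OF s]
    by (intro differentiable_divide differentiable_inner) auto
  then have "\<kappa> differentiable at s" by (simp add: \<kappa>_def[abs_def])
  then show ?thesis
    by (simp add: vector_derivative_works has_real_derivative_iff_has_vector_derivative)
qed

definition conn_coeffs :: "(real \<times> real \<Rightarrow> real \<times> real) \<Rightarrow> (real \<times> real \<Rightarrow> real \<times> real)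
    \<Rightarrow> real \<times> real \<Rightarrow> real \<times> real" where
  "conn_coeffs V Z q =
     (dirD V (cs Z) q + \<kappa> (fst q) * cs V q * cs Z q + \<epsilon> * cs V q * ct Z q,
      dirD V (ct Z) q + \<epsilon> * ct V q * ct Z q)"

lemma ind_conn_push_\<psi>:
  assumes q: "q \<in> U" and Z: "has_partials (cs Z) q" "has_partials (ct Z) q"
  shows "ind_conn C \<psi> V (push \<psi> Z) q = push \<psi> (conn_coeffs V Z) q"
proof -
  obtain s t where q_eq: "q = (s, t)" by (cases q)
  have s: "s \<in> I" using q q_eq by auto
  note Z_derivs = has_partialsD[OF Z(1)[unfolded q_eq]] has_partialsD[OF Z(2)[unfolded q_eq]]
  have "ds (push \<psi> Z) q = ds (\<lambda>q. cs Z q *\<^sub>R \<gamma>' (fst q) + ct Z q *\<^sub>R w) q"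
    by (rule ds_cong_open[OF open_U q push_\<psi>])
  also have "\<dots> = ds (cs Z) q *\<^sub>R \<gamma>' s + cs Z q *\<^sub>R \<gamma>'' s + ds (ct Z) q *\<^sub>R w"
    unfolding ds_def[of "\<lambda>q. cs Z q *\<^sub>R \<gamma>' (fst q) + ct Z q *\<^sub>R w"] q_eq
    by (rule vector_derivative_at)
      (auto intro!: derivative_eq_intros Z_derivs has_vector_derivative_\<gamma>'[OF s] simp: algebra_simps)
  finally have ds_push:
    "ds (push \<psi> Z) q = ds (cs Z) q *\<^sub>R \<gamma>' s + cs Z q *\<^sub>R \<gamma>'' s + ds (ct Z) q *\<^sub>R w" .
  have "dt (push \<psi> Z) q = dt (\<lambda>q. cs Z q *\<^sub>R \<gamma>' (fst q) + ct Z q *\<^sub>R w) q"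
    by (rule dt_cong_open[OF open_U q push_\<psi>])
  also have "\<dots> = dt (cs Z) q *\<^sub>R \<gamma>' s + dt (ct Z) q *\<^sub>R w"
    unfolding dt_def[of "\<lambda>q. cs Z q *\<^sub>R \<gamma>' (fst q) + ct Z q *\<^sub>R w"] q_eq
    by (rule vector_derivative_at) (auto intro!: derivative_eq_intros Z_derivs simp: algebra_simps)
  finally have dt_push: "dt (push \<psi> Z) q = dt (cs Z) q *\<^sub>R \<gamma>' s + dt (ct Z) q *\<^sub>R w" .
  have frame: "w \<bullet> \<gamma>' s = 0" "w \<bullet> w = 1"
    using \<gamma>'_orthogonal_w[OF s] w_unit by (simp_all add: inner_commute norm_eq_1)
  define A where "A = dirD V (cs Z) q + \<epsilon> * cs V q * ct Z q"
  define B where "B = dirD V (ct Z) q + \<epsilon> * ct V q * ct Z q"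
  have "snm_conn C \<psi> V (push \<psi> Z) q
      = A *\<^sub>R \<gamma>' s + B *\<^sub>R w + (cs V q * cs Z q) *\<^sub>R \<gamma>'' s"
    unfolding snm_conn_def dirD_def ds_push dt_push push_\<psi>[OF q] A_def B_def
    by (simp add: q_eq dirD_def inner_C inner_add_right frame algebra_simps)
  then have "ind_conn C \<psi> V (push \<psi> Z) q
      = (A + cs V q * cs Z q * \<kappa> s) *\<^sub>R \<gamma>' s + B *\<^sub>R w"
    unfolding ind_conn_def q_eq by (simp add: tang_\<psi>[OF s])
  also have "\<dots> = push \<psi> (conn_coeffs V Z) q"
    unfolding push_\<psi>[OF q] A_def B_def by (simp add: conn_coeffs_def q_eq algebra_simps)
  finally show ?thesis .
qed

lemma ind_conn_push_smooth_\<psi>: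
  assumes "q \<in> U" "smooth2_on U Z"
  shows "ind_conn C \<psi> V (push \<psi> Z) q = push \<psi> (conn_coeffs V Z) q"
  using ind_conn_push_\<psi> smooth2_on_coeffs(1,2)[OF open_U assms(2,1)] assms(1) by simp

lemma ind_conn_ind_conn_push_\<psi>:
  assumes s: "s \<in> I" and W: "smooth2_on U W" and Z: "smooth2_on U Z"
  shows "ind_conn C \<psi> V (ind_conn C \<psi> W (push \<psi> Z)) (s, t)
    = push \<psi> (conn_coeffs V (conn_coeffs W Z)) (s, t)"
proof -
  have p: "(s, t) \<in> U" using s by simp
  have "ind_conn C \<psi> V (ind_conn C \<psi> W (push \<psi> Z)) (s, t)
      = ind_conn C \<psi> V (push \<psi> (conn_coeffs W Z)) (s, t)"
    using ind_conn_push_smooth_\<psi>[OF _ Z] by (intro ind_conn_cong_open[OF open_U p]) auto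
  also have "\<dots> = push \<psi> (conn_coeffs V (conn_coeffs W Z)) (s, t)"
    using smooth2_on_coeffs(1,2)[OF open_U W p] smooth2_on_coeffs(1-6)[OF open_U Z p] s
      has_partials_fst_comp[of \<kappa>, OF \<kappa>_has_derivative] ds_fst_comp[of \<kappa>, OF \<kappa>_has_derivative]
      dt_fst_comp[of \<kappa>, OF \<kappa>_has_derivative]
    by (intro ind_conn_push_\<psi>[OF p]) (simp_all add: conn_coeffs_def dirD_def)
  finally show ?thesis .
qed

lemma ind_curv_\<psi>:
  assumes s: "s \<in> I" and X: "smooth2_on U X" and Y: "smooth2_on U Y" and Z: "smooth2_on U Z"
  shows "ind_curv C \<psi> X Y Z (s, t)
    = (ct Z (s, t) * (cs X (s, t) * ct Y (s, t) - ct X (s, t) * cs Y (s, t))) *\<^sub>R \<gamma>' s"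
proof -
  let ?p = "(s, t)"
  have p: "?p \<in> U" using s by simp
  have lie: "cs (lie X Y) ?p = dirD X (cs Y) ?p - dirD Y (cs X) ?p"
    "ct (lie X Y) ?p = dirD X (ct Y) ?p - dirD Y (ct X) ?p"
    using lie_coeffs[OF open_U X Y p] by simp_all
  define \<Delta> where "\<Delta> = conn_coeffs X (conn_coeffs Y Z) ?p - conn_coeffs Y (conn_coeffs X Z) ?p
    - conn_coeffs (lie X Y) Z ?p"
  have "ind_curv C \<psi> X Y Z ?p = fst \<Delta> *\<^sub>R \<gamma>' s + snd \<Delta> *\<^sub>R w"
    unfolding ind_curv_def ind_conn_ind_conn_push_\<psi>[OF s X Z] ind_conn_ind_conn_push_\<psi>[OF s Y Z]
      ind_conn_push_smooth_\<psi>[OF p Z] push_\<psi>[OF p] \<Delta>_def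
    by (simp add: algebra_simps)
  moreover have "\<Delta> = ((\<epsilon> * \<epsilon>) * ct Z ?p * (cs X ?p * ct Y ?p - ct X ?p * cs Y ?p), 0)"
    unfolding \<Delta>_def
    using smooth2_on_coeffs(1,2)[OF open_U X p] smooth2_on_coeffs(1,2)[OF open_U Y p]
      smooth2_on_coeffs[OF open_U Z p] s has_partials_fst_comp[of \<kappa>, OF \<kappa>_has_derivative]
      ds_fst_comp[of \<kappa>, OF \<kappa>_has_derivative] dt_fst_comp[of \<kappa>, OF \<kappa>_has_derivative]
    by (simp add: lie conn_coeffs_def dirD_def algebra_simps prod_eq_iff)
  ultimately show ?thesis
    by (simp add: \<epsilon>_square)
qed

lemma sect_curv_\<psi>:
  assumes s: "s \<in> I" and E1: "smooth2_on U E1" and E2: "smooth2_on U E2"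
    and unit1: "norm (push \<psi> E1 (s, t)) = 1" and unit2: "norm (push \<psi> E2 (s, t)) = 1"
    and orth: "push \<psi> E1 (s, t) \<bullet> push \<psi> E2 (s, t) = 0"
  shows "sect_curv C \<psi> E1 E2 (s, t) = 1/2"
proof -
  let ?p = "(s, t)"
  have p: "?p \<in> U" using s by simp
  have frame: "\<gamma>' s \<bullet> w = 0" "w \<bullet> w = 1"
    using \<gamma>'_orthogonal_w[OF s] w_unit by (simp_all add: norm_eq_1)
  have gram: "(\<gamma>' s \<bullet> \<gamma>' s) * (cs E1 ?p * ct E2 ?p - ct E1 ?p * cs E2 ?p)\<^sup>2 = 1"
    using unit1 unit2 orth unfolding push_\<psi>[OF p] fst_conv by (rule gram_det_orthonormal[OF frame])
  have "sect_curv C \<psi> E1 E2 ?p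
      = 1/2 * ((\<gamma>' s \<bullet> \<gamma>' s) * (cs E1 ?p * ct E2 ?p - ct E1 ?p * cs E2 ?p)\<^sup>2)"
    unfolding sect_curv_def ind_curv_\<psi>[OF s E1 E2 E2] ind_curv_\<psi>[OF s E2 E1 E1]
      push_\<psi>[OF p] fst_conv
    using frame by (simp add: inner_add_right inner_commute power2_eq_square algebra_simps)
  then show ?thesis using gram by simp
qed

end

theorem corollary3p2:
  fixes C w :: "real^3" and \<gamma> :: "real \<Rightarrow> real^3" and I :: "real set"
  assumes C_unit: "norm C = 1"
    and w_unit: "norm w = 1"
    and w_parallel: "\<exists>c. w = c *\<^sub>R C"
    and I_open: "open I" and I_interval: "is_interval I"
    and \<gamma>_smooth: "smooth1_on I \<gamma>"
    and \<gamma>_regular: "\<forall>s\<in>I. vector_derivative \<gamma> (at s) \<noteq> 0"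
    and \<gamma>_planar: "\<exists>c. \<forall>s\<in>I. \<gamma> s \<bullet> w = c"
  shows "\<forall>s\<in>I. \<forall>t::real. \<forall>E1 E2.
           smooth2_on (I \<times> UNIV) E1 \<and> smooth2_on (I \<times> UNIV) E2 \<and>
           norm (push (\<lambda>(s', t'). \<gamma> s' + t' *\<^sub>R w) E1 (s, t)) = 1 \<and>
           norm (push (\<lambda>(s', t'). \<gamma> s' + t' *\<^sub>R w) E2 (s, t)) = 1 \<and>
           push (\<lambda>(s', t'). \<gamma> s' + t' *\<^sub>R w) E1 (s, t) \<bullet> push (\<lambda>(s', t'). \<gamma> s' + t' *\<^sub>R w) E2 (s, t) = 0
           \<longrightarrow> sect_curv C (\<lambda>(s', t'). \<gamma> s' + t' *\<^sub>R w) E1 E2 (s, t) = 1/2"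
proof -
  \<comment> \<open>The claim is pointwise.\<close>
  interpret cylinder C w \<gamma> I
    using assms by unfold_locales auto
  show ?thesis using sect_curv_\<psi> by blast
qed

end
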